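(* In the setting below, for every integer $n\ge1$, every $t\in[0,1]$ and every function $f\ge0$ on $(\Sigma_N)^n$, \[\nu_t(f)\le\exp(6n^2\beta^2S^4)\,\nu_1(f).\]
   Context: Fix $S\ge1$, $\Sigma=\{0,\pm1,\dots,\pm S\}$, $\Sigma_N=\Sigma^N$, $\beta\ge0$, $D\in\mathbb{R}$, $h\ge 0$, and assume $\beta$ is small enough that the system $p=\mathbb{E}\big[\frac{\sum_{\gamma=1}^{S}\gamma^2\, 2\cosh[\gamma(\sqrt{q}\beta X+h)]e^{\gamma^2[D+\frac{\beta^2}{2}(p-q)]}}{1+\sum_{\gamma=1}^{S}2\cosh[\gamma(\sqrt{q}\beta X+h)]e^{\gamma^2[D+\frac{\beta^2}{2}(p-q)]}}\big]$, $q=\mathbb{E}\big[\big(\frac{\sum_{\gamma=1}^{S}\gamma\, 2\sinh[\gamma(\sqrt{q}\beta X+h)]e^{\gamma^2[D+\frac{\beta^2}{2}(p-q)]}}{1+\sum_{\gamma=1}^{S}2\cosh[\gamma(\sqrt{q}\beta X+h)]e^{\gamma^2[D+\frac{\beta^2}{2}(p-q)]}}\big)^2\big]$ ($X$ standard Gaussian) has a unique solution $(p,q)$. Let $(g_{ij})_{i<j}$ be i.i.d. standard Gaussians and $z$ an independent standard Gaussian. For $\sigma\in\Sigma_N$, $\rho=(\sigma_1,\dots,\sigma_{N-1})$, $H_{N-1}(\rho)=\frac{\beta}{\sqrt N}\sum_{1\le i<j\le N-1}g_{ij}\sigma_i\sigma_j+D\sum_{i\le N-1}\sigma_i^2+h\sum_{i\le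 N-1}\sigma_i$, and for $t\in[0,1]$ $H_t(\sigma)=H_{N-1}(\rho)+\sigma_N\big[\sqrt t\frac{\beta}{\sqrt N}\sum_{i<N}g_{iN}\sigma_i+\sqrt{1-t}\,\beta z\sqrt q\big]+(1-t)\frac{\beta^2}{2}(p-q)\sigma_N^2+D\sigma_N^2+h\sigma_N$. Let $\langle\cdot\rangle_t$ be the Gibbs average for $H_t$, extended to functions of $n$ replicas $(\sigma^1,\dots,\sigma^n)$ (i.i.d. samples given the disorder), and $\nu_t(f)=\mathbb{E}\langle f\rangle_t$ with $\mathbb{E}$ over $(g_{ij})$ and $z$. *)

theory Defs
  imports "HOL-Probability.Probability"
begin

definition std_gauss :: "real measure" where
  "std_gauss = density lborel std_normal_density"

definition spins :: "nat \<Rightarrow> int set" where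
  "spins S = {- int S .. int S}"

definition configs :: "nat \<Rightarrow> nat \<Rightarrow> (nat \<Rightarrow> int) set" where
  "configs S N = PiE {1..N} (\<lambda>_. spins S)"

definition replicas :: "nat \<Rightarrow> nat \<Rightarrow> nat \<Rightarrow> (nat \<Rightarrow> nat \<Rightarrow> int) set" where
  "replicas S N n = PiE {1..n} (\<lambda>_. configs S N)"

text \<open>Disorder: Some (i,j) is g_ij for 1 <= i < j <= N, None is z.\<close>
definition pairs :: "nat \<Rightarrow> (nat \<times> nat) set" where
  "pairs N = {(i, j). 1 \<le> i \<and> i < j \<and> j \<le> N}"

definition disorder :: "nat \<Rightarrow> ((nat \<times> nat) option \<Rightarrow> real) measure" where
  "disorder N = PiM (insert None (Some ` pairs N)) (\<lambda>_. std_gauss)"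

definition H_t ::
  "real \<Rightarrow> real \<Rightarrow> real \<Rightarrow> real \<Rightarrow> real \<Rightarrow> nat \<Rightarrow> real \<Rightarrow>
   ((nat \<times> nat) option \<Rightarrow> real) \<Rightarrow> (nat \<Rightarrow> int) \<Rightarrow> real" where
  "H_t \<beta> D h p q N t g \<sigma> =
     (\<beta> / sqrt N) * (\<Sum>(i, j)\<in>pairs (N - 1). g (Some (i, j)) * \<sigma> i * \<sigma> j)
     + D * (\<Sum>i\<in>{1..N - 1}. (\<sigma> i)\<^sup>2) + h * (\<Sum>i\<in>{1..N - 1}. \<sigma> i)
     + \<sigma> N * (sqrt t * (\<beta> / sqrt N) * (\<Sum>i\<in>{1..<N}. g (Some (i, N)) * \<sigma> i)
               + sqrt (1 - t) * \<beta> * g None * sqrt q)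
     + (1 - t) * (\<beta>\<^sup>2 / 2) * (p - q) * (\<sigma> N)\<^sup>2 + D * (\<sigma> N)\<^sup>2 + h * \<sigma> N"

definition gibbs_avg ::
  "(nat \<Rightarrow> int) set \<Rightarrow> ((nat \<Rightarrow> int) \<Rightarrow> real) \<Rightarrow> nat \<Rightarrow> ((nat \<Rightarrow> nat \<Rightarrow> int) \<Rightarrow> real) \<Rightarrow> real" where
  "gibbs_avg C H n f =
     (\<Sum>\<sigma>s\<in>PiE {1..n} (\<lambda>_. C). f \<sigma>s * (\<Prod>l\<in>{1..n}. exp (H (\<sigma>s l))))
     / (\<Sum>\<sigma>\<in>C. exp (H \<sigma>)) ^ n"

definition nu_t ::
  "nat \<Rightarrow> real \<Rightarrow> real \<Rightarrow> real \<Rightarrow> real \<Rightarrow> real \<Rightarrow> nat \<Rightarrow> real \<Rightarrow> nat \<Rightarrow>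
   ((nat \<Rightarrow> nat \<Rightarrow> int) \<Rightarrow> real) \<Rightarrow> real" where
  "nu_t S \<beta> D h p q N t n f =
     integral\<^sup>L (disorder N) (\<lambda>g. gibbs_avg (configs S N) (H_t \<beta> D h p q N t g) n f)"

definition fp_denom :: "nat \<Rightarrow> real \<Rightarrow> real \<Rightarrow> real \<Rightarrow> real \<Rightarrow> real \<Rightarrow> real \<Rightarrow> real" where
  "fp_denom S \<beta> D h p q x =
     1 + (\<Sum>\<gamma>\<in>{1..S}. 2 * cosh (real \<gamma> * (sqrt q * \<beta> * x + h))
                         * exp ((real \<gamma>)\<^sup>2 * (D + \<beta>\<^sup>2 / 2 * (p - q))))"

definition fp_system :: "nat \<Rightarrow> real \<Rightarrow> real \<Rightarrow> real \<Rightarrow> real \<Rightarrow> real \<Rightarrow> bool" where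
  "fp_system S \<beta> D h p q \<longleftrightarrow>
     p = integral\<^sup>L std_gauss (\<lambda>x.
           (\<Sum>\<gamma>\<in>{1..S}. (real \<gamma>)\<^sup>2 * 2 * cosh (real \<gamma> * (sqrt q * \<beta> * x + h))
                         * exp ((real \<gamma>)\<^sup>2 * (D + \<beta>\<^sup>2 / 2 * (p - q))))
           / fp_denom S \<beta> D h p q x)
   \<and> q = integral\<^sup>L std_gauss (\<lambda>x.
           ((\<Sum>\<gamma>\<in>{1..S}. real \<gamma> * 2 * sinh (real \<gamma> * (sqrt q * \<beta> * x + h))
                         * exp ((real \<gamma>)\<^sup>2 * (D + \<beta>\<^sup>2 / 2 * (p - q))))
           / fp_denom S \<beta> D h p q x)\<^sup>2)"

end

theory Submission
  imports Defs "HOL-Real_Asymp.Real_Asymp"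
begin

(* Let u(t) = nu_t(f). Summed over the n replicas, H_t has the form
   E0 + sqrt t * (SUM i<N. g_iN * A_i) + sqrt (1 - t) * z * B + (1 - t) * C, where E0 does not
   involve g_iN or z. Hence u'(t) is the disorder average of the Gibbs covariance of f with
   dH_t/dt, and Gaussian integration by parts in g_iN and z turns each term g_k * cov(f, A_k)
   into the derivative of that covariance in direction A_k, which is the covariance of f with
   (A_k - <A_k>)^2. For f >= 0 this is at least -M_k^2 <f> and at most 4 M_k^2 <f>, where
   |A_k| <= M_k; the term from C is at most 2 sup|C| <f>. So u' >= -K u, and Gronwall gives
   u(t) <= exp (K (1 - t)) u(1). With |sigma| <= S and 0 <= p, q <= S^2 for every solution of the
   fixed-point system, K <= 7/2 n^2 beta^2 S^4. *)

section \<open>Gibbs averages over a finite set\<close>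

definition gibbs_mean :: "'s set \<Rightarrow> ('s \<Rightarrow> real) \<Rightarrow> ('s \<Rightarrow> real) \<Rightarrow> real" where
  "gibbs_mean P E h = (\<Sum>s\<in>P. h s * exp (E s)) / (\<Sum>s\<in>P. exp (E s))"

definition gibbs_cov :: "'s set \<Rightarrow> ('s \<Rightarrow> real) \<Rightarrow> ('s \<Rightarrow> real) \<Rightarrow> ('s \<Rightarrow> real) \<Rightarrow> real" where
  "gibbs_cov P E h k = gibbs_mean P E (\<lambda>s. h s * k s) - gibbs_mean P E h * gibbs_mean P E k"

definition gibbs_cov_deriv :: "'s set \<Rightarrow> ('s \<Rightarrow> real) \<Rightarrow> ('s \<Rightarrow> real) \<Rightarrow> ('s \<Rightarrow> real) \<Rightarrow> real" where
  "gibbs_cov_deriv P E f A =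
     gibbs_cov P E (\<lambda>s. f s * A s) A - gibbs_cov P E f A * gibbs_mean P E A - gibbs_mean P E f * gibbs_cov P E A A"

lemma gibbs_partition_pos: "finite P \<Longrightarrow> P \<noteq> {} \<Longrightarrow> 0 < (\<Sum>s\<in>P. exp (E s :: real))"
  by (rule sum_pos) auto

lemma gibbs_mean_add: "gibbs_mean P E (\<lambda>s. h s + k s) = gibbs_mean P E h + gibbs_mean P E k"
  by (simp add: gibbs_mean_def distrib_right sum.distrib add_divide_distrib)

lemma gibbs_mean_diff: "gibbs_mean P E (\<lambda>s. h s - k s) = gibbs_mean P E h - gibbs_mean P E k"
  by (simp add: gibbs_mean_def left_diff_distrib sum_subtractf diff_divide_distrib)

lemma gibbs_mean_cmult: "gibbs_mean P E (\<lambda>s. c * h s) = c * gibbs_mean P E h"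
  by (simp add: gibbs_mean_def sum_distrib_left mult.assoc)

lemma gibbs_mean_sum: "gibbs_mean P E (\<lambda>s. \<Sum>k\<in>K. h k s) = (\<Sum>k\<in>K. gibbs_mean P E (h k))"
  unfolding gibbs_mean_def
  by (simp add: sum_distrib_right sum_divide_distrib[symmetric] sum.swap[of _ P])

lemma gibbs_mean_cong: "(\<And>s. s \<in> P \<Longrightarrow> h s = k s) \<Longrightarrow> gibbs_mean P E h = gibbs_mean P E k"
  by (simp add: gibbs_mean_def)

lemma gibbs_mean_const: "finite P \<Longrightarrow> P \<noteq> {} \<Longrightarrow> gibbs_mean P E (\<lambda>s. c) = c"
  using gibbs_partition_pos[of P E] by (simp add: gibbs_mean_def sum_distrib_left[symmetric])

lemma gibbs_mean_mono:
  assumes "finite P" "P \<noteq> {}" "\<And>s. s \<in> P \<Longrightarrow> h s \<le> k s"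
  shows "gibbs_mean P E h \<le> gibbs_mean P E k"
  unfolding gibbs_mean_def using assms gibbs_partition_pos[of P E]
  by (intro divide_right_mono sum_mono mult_right_mono) auto

lemma gibbs_mean_nonneg:
  assumes "finite P" "P \<noteq> {}" "\<And>s. s \<in> P \<Longrightarrow> 0 \<le> h s"
  shows "0 \<le> gibbs_mean P E h"
  using gibbs_mean_mono[of P "\<lambda>s. 0" h E] assms gibbs_mean_const[of P E 0] by simp

lemma gibbs_mean_le_sum:
  assumes "finite P" "P \<noteq> {}" "\<And>s. s \<in> P \<Longrightarrow> 0 \<le> f s"
  shows "gibbs_mean P E f \<le> (\<Sum>s\<in>P. f s)"
proof -
  have "gibbs_mean P E f \<le> gibbs_mean P E (\<lambda>_. \<Sum>s\<in>P. f s)"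
    using assms by (intro gibbs_mean_mono) (auto intro: member_le_sum)
  then show ?thesis using gibbs_mean_const assms by metis
qed

lemma gibbs_mean_abs_le:
  assumes "finite P" "P \<noteq> {}" "\<And>s. s \<in> P \<Longrightarrow> \<bar>h s\<bar> \<le> M"
  shows "\<bar>gibbs_mean P E h\<bar> \<le> M"
proof -
  have "gibbs_mean P E h \<le> gibbs_mean P E (\<lambda>_. M)" "gibbs_mean P E (\<lambda>_. - M) \<le> gibbs_mean P E h"
    using assms by (auto intro!: gibbs_mean_mono simp: abs_le_iff) (metis minus_le_iff)
  then show ?thesis using gibbs_mean_const[OF assms(1,2)] by (simp add: abs_le_iff)
qed

lemma gibbs_mean_mult_le:
  assumes "finite P" "P \<noteq> {}" "\<And>s. s \<in> P \<Longrightarrow> 0 \<le> f s" "\<And>s. s \<in> P \<Longrightarrow> h s \<le> M"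
  shows "gibbs_mean P E (\<lambda>s. f s * h s) \<le> M * gibbs_mean P E f"
proof -
  have "gibbs_mean P E (\<lambda>s. f s * h s) \<le> gibbs_mean P E (\<lambda>s. M * f s)"
    using assms by (intro gibbs_mean_mono) (auto simp: mult.commute[of M] intro: mult_left_mono)
  then show ?thesis by (simp add: gibbs_mean_cmult)
qed

lemma gibbs_cov_diff_right: "gibbs_cov P E f (\<lambda>s. h s - k s) = gibbs_cov P E f h - gibbs_cov P E f k"
  unfolding gibbs_cov_def by (simp add: gibbs_mean_diff algebra_simps)

lemma gibbs_cov_cmult_right: "gibbs_cov P E f (\<lambda>s. c * h s) = c * gibbs_cov P E f h"
  using gibbs_mean_cmult[of P E c "\<lambda>s. f s * h s"]
  unfolding gibbs_cov_def by (simp add: gibbs_mean_cmult algebra_simps)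

lemma gibbs_cov_sum_right: "gibbs_cov P E f (\<lambda>s. \<Sum>k\<in>K. h k s) = (\<Sum>k\<in>K. gibbs_cov P E f (h k))"
  unfolding gibbs_cov_def
  by (simp add: sum_distrib_left gibbs_mean_sum sum_subtractf)

lemma gibbs_mean_has_derivative:
  assumes "finite P" "P \<noteq> {}"
    and E: "\<And>s. s \<in> P \<Longrightarrow> ((\<lambda>y. E y s) has_real_derivative E' s) (at y0 within X)"
  shows "((\<lambda>y. gibbs_mean P (E y) h) has_real_derivative
           gibbs_mean P (E y0) (\<lambda>s. h s * E' s) - gibbs_mean P (E y0) h * gibbs_mean P (E y0) E')
         (at y0 within X)"
proof -
  let ?Z = "\<Sum>s\<in>P. exp (E y0 s)"
  have Z: "?Z \<noteq> 0" using gibbs_partition_pos assms by (metis less_irrefl)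
  have "((\<lambda>y. gibbs_mean P (E y) h) has_real_derivative
     ((\<Sum>s\<in>P. h s * (exp (E y0 s) * E' s)) * ?Z
       - (\<Sum>s\<in>P. h s * exp (E y0 s)) * (\<Sum>s\<in>P. exp (E y0 s) * E' s)) / (?Z * ?Z)) (at y0 within X)"
    unfolding gibbs_mean_def using Z
    by (intro DERIV_divide DERIV_sum DERIV_cmult DERIV_chain2[OF DERIV_exp] E) auto
  moreover have "((\<Sum>s\<in>P. h s * (exp (E y0 s) * E' s)) * ?Z
       - (\<Sum>s\<in>P. h s * exp (E y0 s)) * (\<Sum>s\<in>P. exp (E y0 s) * E' s)) / (?Z * ?Z)
      = gibbs_mean P (E y0) (\<lambda>s. h s * E' s) - gibbs_mean P (E y0) h * gibbs_mean P (E y0) E'"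
    unfolding gibbs_mean_def using Z by (simp add: diff_divide_distrib mult_ac)
  ultimately show ?thesis by simp
qed

lemma gibbs_mean_has_derivative_dir:
  assumes "finite P" "P \<noteq> {}"
  shows "((\<lambda>y. gibbs_mean P (\<lambda>s. a s + y * (c * A s)) h) has_real_derivative
           c * gibbs_cov P (\<lambda>s. a s + y0 * (c * A s)) h A) (at y0)"
proof -
  let ?E = "\<lambda>s. a s + y0 * (c * A s)"
  have "((\<lambda>y. gibbs_mean P (\<lambda>s. a s + y * (c * A s)) h) has_real_derivative
     gibbs_mean P ?E (\<lambda>s. h s * (c * A s)) - gibbs_mean P ?E h * gibbs_mean P ?E (\<lambda>s. c * A s)) (at y0)"
    by (rule gibbs_mean_has_derivative[OF assms]) (auto intro!: derivative_eq_intros)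
  moreover have "gibbs_mean P ?E (\<lambda>s. h s * (c * A s)) = c * gibbs_mean P ?E (\<lambda>s. h s * A s)"
    using gibbs_mean_cmult[of P _ c "\<lambda>s. h s * A s"] by (simp add: mult_ac)
  ultimately show ?thesis unfolding gibbs_cov_def by (simp add: gibbs_mean_cmult algebra_simps)
qed

lemma gibbs_cov_has_derivative_dir:
  assumes "finite P" "P \<noteq> {}"
  shows "((\<lambda>y. gibbs_cov P (\<lambda>s. a s + y * (c * A s)) f A) has_real_derivative
           c * gibbs_cov_deriv P (\<lambda>s. a s + y0 * (c * A s)) f A) (at y0)"
proof -
  let ?E = "\<lambda>y s. a s + y * (c * A s)"
  have "((\<lambda>y. gibbs_mean P (?E y) (\<lambda>s. f s * A s) - gibbs_mean P (?E y) f * gibbs_mean P (?E y) A)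
      has_real_derivative c * gibbs_cov P (?E y0) (\<lambda>s. f s * A s) A
        - (c * gibbs_cov P (?E y0) f A * gibbs_mean P (?E y0) A
           + c * gibbs_cov P (?E y0) A A * gibbs_mean P (?E y0) f)) (at y0)"
    by (intro DERIV_diff DERIV_mult gibbs_mean_has_derivative_dir assms)
  then show ?thesis unfolding gibbs_cov_def[of P _ f A] gibbs_cov_deriv_def by (simp add: algebra_simps)
qed

lemma continuous_on_gibbs_mean:
  assumes "finite P" "P \<noteq> {}" "\<And>s. s \<in> P \<Longrightarrow> continuous_on S (\<lambda>y. E y s)"
  shows "continuous_on S (\<lambda>y. gibbs_mean P (E y) h)"
  unfolding gibbs_mean_def
proof (intro continuous_on_divide continuous_on_sum continuous_on_mult continuous_on_const
    continuous_on_exp assms ballI)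
  show "(\<Sum>s\<in>P. exp (E y s)) \<noteq> 0" for y
    using gibbs_partition_pos[OF assms(1,2)] by (metis less_irrefl)
qed

lemma continuous_on_gibbs_cov_deriv_dir:
  assumes "finite P" "P \<noteq> {}"
  shows "continuous_on UNIV (\<lambda>y. gibbs_cov_deriv P (\<lambda>s. a s + y * b s) f A)"
  unfolding gibbs_cov_deriv_def gibbs_cov_def
  by (intro continuous_intros continuous_on_gibbs_mean[OF assms])

lemma gibbs_mean_measurable:
  assumes "\<And>s. (\<lambda>x. E x s) \<in> borel_measurable M" "\<And>s. (\<lambda>x. h x s) \<in> borel_measurable M"
  shows "(\<lambda>x. gibbs_mean P (E x) (h x)) \<in> borel_measurable M"
  unfolding gibbs_mean_def using assms by measurable

lemma gibbs_cov_measurable: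
  assumes "\<And>s. (\<lambda>x. E x s) \<in> borel_measurable M" "\<And>s. (\<lambda>x. h x s) \<in> borel_measurable M"
  shows "(\<lambda>x. gibbs_cov P (E x) f (h x)) \<in> borel_measurable M"
  unfolding gibbs_cov_def
  by (intro borel_measurable_diff borel_measurable_times gibbs_mean_measurable assms) measurable

lemma gibbs_cov_deriv_measurable:
  assumes "\<And>s. (\<lambda>x. E x s) \<in> borel_measurable M"
  shows "(\<lambda>x. gibbs_cov_deriv P (E x) f A) \<in> borel_measurable M"
  unfolding gibbs_cov_deriv_def gibbs_cov_def
  by (intro borel_measurable_diff borel_measurable_times gibbs_mean_measurable assms) simp_all

lemma gibbs_variance_eq:
  assumes "finite P" "P \<noteq> {}"
  shows "gibbs_mean P E (\<lambda>s. (A s - gibbs_mean P E A)\<^sup>2) = gibbs_mean P E (\<lambda>s. (A s)\<^sup>2) - (gibbs_mean P E A)\<^sup>2"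
proof -
  let ?m = "gibbs_mean P E A"
  have "gibbs_mean P E (\<lambda>s. (A s - ?m)\<^sup>2) = gibbs_mean P E (\<lambda>s. ((A s)\<^sup>2 - (2 * ?m) * A s) + ?m\<^sup>2)"
    by (intro gibbs_mean_cong) (simp add: power2_eq_square algebra_simps)
  then show ?thesis
    by (simp add: gibbs_mean_add gibbs_mean_diff gibbs_mean_cmult gibbs_mean_const[OF assms]
        power2_eq_square)
qed

lemma gibbs_cov_deriv_eq_cov_sq:
  assumes "finite P" "P \<noteq> {}"
  shows "gibbs_cov_deriv P E f A = gibbs_cov P E f (\<lambda>s. (A s - gibbs_mean P E A)\<^sup>2)"
proof -
  let ?m = "gibbs_mean P E A"
  have "gibbs_mean P E (\<lambda>s. f s * (A s - ?m)\<^sup>2)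
      = gibbs_mean P E (\<lambda>s. (f s * A s * A s - (2 * ?m) * (f s * A s)) + ?m\<^sup>2 * f s)"
    by (intro gibbs_mean_cong) (simp add: power2_eq_square algebra_simps)
  then have "gibbs_mean P E (\<lambda>s. f s * (A s - ?m)\<^sup>2)
      = gibbs_mean P E (\<lambda>s. f s * A s * A s) - 2 * ?m * gibbs_mean P E (\<lambda>s. f s * A s)
        + ?m\<^sup>2 * gibbs_mean P E f"
    by (simp add: gibbs_mean_add gibbs_mean_diff gibbs_mean_cmult)
  then show ?thesis
    unfolding gibbs_cov_deriv_def gibbs_cov_def[of P E f] gibbs_variance_eq[OF assms]
    unfolding gibbs_cov_def by (simp add: power2_eq_square algebra_simps)
qed

lemma gibbs_cov_deriv_ge:
  assumes "finite P" "P \<noteq> {}" "\<And>s. s \<in> P \<Longrightarrow> 0 \<le> f s"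
    and A: "\<And>s. s \<in> P \<Longrightarrow> \<bar>A s\<bar> \<le> M"
  shows "- (M\<^sup>2 * gibbs_mean P E f) \<le> gibbs_cov_deriv P E f A"
proof -
  let ?m = "gibbs_mean P E A"
  have "gibbs_mean P E (\<lambda>s. (A s - ?m)\<^sup>2) \<le> gibbs_mean P E (\<lambda>s. (A s)\<^sup>2)"
    using gibbs_variance_eq[OF assms(1,2)] by simp
  also have "\<dots> \<le> gibbs_mean P E (\<lambda>s. M\<^sup>2)"
  proof (rule gibbs_mean_mono[OF assms(1,2)])
    fix s assume "s \<in> P"
    then show "(A s)\<^sup>2 \<le> M\<^sup>2" using A by (metis abs_ge_zero power2_abs power_mono)
  qed
  finally have "gibbs_mean P E f * gibbs_mean P E (\<lambda>s. (A s - ?m)\<^sup>2) \<le> gibbs_mean P E f * M\<^sup>2"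
    using assms by (intro mult_left_mono gibbs_mean_nonneg) (auto simp: gibbs_mean_const)
  moreover have "0 \<le> gibbs_mean P E (\<lambda>s. f s * (A s - ?m)\<^sup>2)"
    using assms by (intro gibbs_mean_nonneg) auto
  ultimately show ?thesis
    unfolding gibbs_cov_deriv_eq_cov_sq[OF assms(1,2)] gibbs_cov_def by (simp add: mult.commute)
qed

lemma gibbs_cov_deriv_le:
  assumes "finite P" "P \<noteq> {}" "\<And>s. s \<in> P \<Longrightarrow> 0 \<le> f s"
    and A: "\<And>s. s \<in> P \<Longrightarrow> \<bar>A s\<bar> \<le> M"
  shows "gibbs_cov_deriv P E f A \<le> 4 * M\<^sup>2 * gibbs_mean P E f"
proof -
  let ?m = "gibbs_mean P E A"
  have m: "\<bar>?m\<bar> \<le> M" using gibbs_mean_abs_le assms by blast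
  have "gibbs_mean P E (\<lambda>s. f s * (A s - ?m)\<^sup>2) \<le> (4 * M\<^sup>2) * gibbs_mean P E f"
  proof (rule gibbs_mean_mult_le[OF assms(1-3)])
    fix s assume "s \<in> P"
    then have "\<bar>A s - ?m\<bar> \<le> \<bar>2 * M\<bar>" using A[of s] m by linarith
    then show "(A s - ?m)\<^sup>2 \<le> 4 * M\<^sup>2" by (simp add: abs_le_square_iff power_mult_distrib)
  qed
  moreover have "0 \<le> gibbs_mean P E f * gibbs_mean P E (\<lambda>s. (A s - ?m)\<^sup>2)"
    using assms by (intro mult_nonneg_nonneg gibbs_mean_nonneg) auto
  ultimately show ?thesis
    unfolding gibbs_cov_deriv_eq_cov_sq[OF assms(1,2)] gibbs_cov_def by simp
qed

lemma gibbs_cov_le: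
  assumes "finite P" "P \<noteq> {}" "\<And>s. s \<in> P \<Longrightarrow> 0 \<le> f s"
    and C: "\<And>s. s \<in> P \<Longrightarrow> \<bar>C s\<bar> \<le> M"
  shows "gibbs_cov P E f C \<le> 2 * M * gibbs_mean P E f"
proof -
  have "gibbs_mean P E (\<lambda>s. f s * C s) \<le> M * gibbs_mean P E f"
    using assms by (intro gibbs_mean_mult_le) (auto simp: abs_le_iff)
  moreover have "\<bar>gibbs_mean P E C\<bar> \<le> M" "0 \<le> gibbs_mean P E f"
    using assms by (auto intro: gibbs_mean_abs_le gibbs_mean_nonneg)
  then have "\<bar>gibbs_mean P E f * gibbs_mean P E C\<bar> \<le> M * gibbs_mean P E f"
    by (simp add: abs_mult) (metis mult.commute mult_left_mono)
  ultimately show ?thesis unfolding gibbs_cov_def by linarith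
qed

lemma gibbs_cov_abs_le:
  assumes "finite P" "P \<noteq> {}" "\<And>s. s \<in> P \<Longrightarrow> 0 \<le> f s"
    and C: "\<And>s. s \<in> P \<Longrightarrow> \<bar>C s\<bar> \<le> M"
  shows "\<bar>gibbs_cov P E f C\<bar> \<le> 2 * M * (\<Sum>s\<in>P. f s)"
proof -
  have "gibbs_cov P E f C \<le> 2 * M * gibbs_mean P E f"
    using assms by (rule gibbs_cov_le)
  moreover have "gibbs_cov P E f (\<lambda>s. - C s) \<le> 2 * M * gibbs_mean P E f"
    using assms by (intro gibbs_cov_le) auto
  then have "- gibbs_cov P E f C \<le> 2 * M * gibbs_mean P E f"
    using gibbs_cov_cmult_right[of P E f "-1" C] by simp
  moreover have "0 \<le> M" using C assms(2) by (meson abs_ge_zero all_not_in_conv order_trans)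
  then have "2 * M * gibbs_mean P E f \<le> 2 * M * (\<Sum>s\<in>P. f s)"
    using assms by (intro mult_left_mono gibbs_mean_le_sum) auto
  ultimately show ?thesis by linarith
qed

lemma gibbs_cov_deriv_abs_le:
  assumes "finite P" "P \<noteq> {}" "\<And>s. s \<in> P \<Longrightarrow> 0 \<le> f s"
    and "\<And>s. s \<in> P \<Longrightarrow> \<bar>A s\<bar> \<le> M"
  shows "\<bar>gibbs_cov_deriv P E f A\<bar> \<le> 4 * M\<^sup>2 * (\<Sum>s\<in>P. f s)"
proof -
  have "0 \<le> gibbs_mean P E f" "gibbs_mean P E f \<le> (\<Sum>s\<in>P. f s)"
    using assms by (auto intro: gibbs_mean_nonneg gibbs_mean_le_sum)
  then have "M\<^sup>2 * gibbs_mean P E f \<le> 4 * M\<^sup>2 * (\<Sum>s\<in>P. f s)"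
    and "4 * M\<^sup>2 * gibbs_mean P E f \<le> 4 * M\<^sup>2 * (\<Sum>s\<in>P. f s)"
    by (auto intro: mult_left_mono order_trans[OF mult_left_mono])
  moreover have "- (M\<^sup>2 * gibbs_mean P E f) \<le> gibbs_cov_deriv P E f A"
    using assms by (rule gibbs_cov_deriv_ge)
  moreover have "gibbs_cov_deriv P E f A \<le> 4 * M\<^sup>2 * gibbs_mean P E f"
    using assms by (rule gibbs_cov_deriv_le)
  ultimately show ?thesis by (simp add: abs_le_iff)
qed

section \<open>Gaussian integration by parts\<close>

lemma prob_space_std_gauss: "prob_space std_gauss"
  unfolding std_gauss_def using prob_space_normal_density[of 1 0] by simp

lemma sets_std_gauss [simp, measurable_cong]: "sets std_gauss = sets borel"
  by (simp add: std_gauss_def)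

lemma space_std_gauss [simp]: "space std_gauss = UNIV"
  by (simp add: std_gauss_def)

lemma integrable_std_gauss_abs: "integrable std_gauss (\<lambda>x. \<bar>x\<bar>)"
  unfolding std_gauss_def using integrable_std_normal_moment_abs[of 1]
  by (subst integrable_density) auto

lemma std_normal_density_has_derivative:
  "(std_normal_density has_real_derivative - y * std_normal_density y) (at y)"
proof -
  have "((\<lambda>y. (1 / sqrt (2 * pi)) * exp (- y\<^sup>2 / 2)) has_real_derivative
          (1 / sqrt (2 * pi)) * (exp (- y\<^sup>2 / 2) * (- (2 * y) / 2))) (at y)"
    by (intro DERIV_cmult DERIV_chain2[OF DERIV_exp]) (auto intro!: derivative_eq_intros)
  then show ?thesis
    by (simp add: std_normal_density_def[abs_def] std_normal_density_def mult_ac)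
qed

lemma std_gauss_integration_by_parts:
  fixes h h' :: "real \<Rightarrow> real"
  assumes h: "\<And>y. (h has_real_derivative h' y) (at y)" and h': "continuous_on UNIV h'"
    and M: "\<And>y. \<bar>h y\<bar> \<le> M" and M': "\<And>y. \<bar>h' y\<bar> \<le> M'"
  shows "(\<integral>y. y * h y \<partial>std_gauss) = (\<integral>y. h' y \<partial>std_gauss)"
proof -
  let ?\<phi> = "std_normal_density"
  have cont_h: "continuous_on UNIV h"
    using h by (meson DERIV_isCont continuous_at_imp_continuous_on)
  have [measurable]: "h \<in> borel_measurable borel" "h' \<in> borel_measurable borel"
    using cont_h h' by (auto intro: borel_measurable_continuous_onI)
  have hM: "\<bar>h y\<bar> \<le> \<bar>M\<bar>" and hM': "\<bar>h' y\<bar> \<le> \<bar>M'\<bar>" for y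
    using M[of y] M'[of y] by linarith+
  have int_h': "integrable lborel (\<lambda>y. ?\<phi> y * h' y)"
    by (rule Bochner_Integration.integrable_bound[where f = "\<lambda>y. ?\<phi> y * M'"])
       (use hM' in \<open>auto simp: abs_mult intro!: mult_left_mono\<close>)
  have "integrable lborel (\<lambda>y. (?\<phi> y * \<bar>y\<bar>) * M)"
    using integrable_std_normal_moment_abs[of 1] by simp
  then have int_yh: "integrable lborel (\<lambda>y. ?\<phi> y * (y * h y))"
    by (rule Bochner_Integration.integrable_bound)
       (use hM in \<open>auto simp: abs_mult mult.assoc intro!: mult_left_mono\<close>)
  have tendsto_0: "((\<lambda>y. ?\<phi> y * h y) \<longlongrightarrow> 0) F" if "(?\<phi> \<longlongrightarrow> 0) F" for F
  proof (rule Lim_null_comparison)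
    show "\<forall>\<^sub>F y in F. norm (?\<phi> y * h y) \<le> ?\<phi> y * \<bar>M\<bar>"
      using hM by (intro always_eventually allI) (auto simp: abs_mult intro!: mult_left_mono)
    show "((\<lambda>y. ?\<phi> y * \<bar>M\<bar>) \<longlongrightarrow> 0) F"
      using tendsto_mult_left_zero[OF that] .
  qed
  have \<phi>_bot: "(?\<phi> \<longlongrightarrow> 0) at_bot" and \<phi>_top: "(?\<phi> \<longlongrightarrow> 0) at_top"
    unfolding std_normal_density_def by real_asymp+
  have "(LBINT y=-\<infinity>..\<infinity>. ?\<phi> y * h' y - ?\<phi> y * (y * h y)) = 0 - 0"
  proof (rule interval_integral_FTC_integrable[where F = "\<lambda>y. ?\<phi> y * h y"])
    show "((\<lambda>y. ?\<phi> y * h y) has_vector_derivative ?\<phi> x * h' x - ?\<phi> x * (x * h x)) (at x)" for x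
      using DERIV_mult[OF std_normal_density_has_derivative h]
      by (simp add: has_real_derivative_iff_has_vector_derivative[symmetric] algebra_simps)
    show "isCont (\<lambda>y. ?\<phi> y * h' y - ?\<phi> y * (y * h y)) x" for x
      using cont_h h' std_normal_density_has_derivative
      by (intro continuous_intros) (auto intro: DERIV_isCont simp: continuous_on_eq_continuous_at)
    show "set_integrable lborel (einterval (-\<infinity>) \<infinity>) (\<lambda>y. ?\<phi> y * h' y - ?\<phi> y * (y * h y))"
      using int_h' int_yh by (simp add: set_integrable_def)
    show "(((\<lambda>y. ?\<phi> y * h y) \<circ> real_of_ereal) \<longlongrightarrow> 0) (at_right (-\<infinity>))"
      "(((\<lambda>y. ?\<phi> y * h y) \<circ> real_of_ereal) \<longlongrightarrow> 0) (at_left \<infinity>)"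
      unfolding ereal_tendsto_simps using \<phi>_bot \<phi>_top by (auto intro: tendsto_0)
  qed simp
  then have "(\<integral>y. ?\<phi> y * h' y \<partial>lborel) = (\<integral>y. ?\<phi> y * (y * h y) \<partial>lborel)"
    using int_h' int_yh by (simp add: interval_lebesgue_integral_def set_lebesgue_integral_def)
  then show ?thesis
    unfolding std_gauss_def by (simp add: integral_density)
qed

abbreviation gaussians :: "'i set \<Rightarrow> ('i \<Rightarrow> real) measure" where
  "gaussians I \<equiv> PiM I (\<lambda>_. std_gauss)"

lemma prob_space_gaussians: "prob_space (gaussians I)"
  by (rule prob_space_PiM) (rule prob_space_std_gauss)

lemma measurable_gaussians_component [measurable]: "(\<lambda>g. g k) \<in> borel_measurable (gaussians I)"
proof (cases "k \<in> I")
  case True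
  then have "(\<lambda>g. g k) \<in> measurable (gaussians I) std_gauss"
    by (rule measurable_component_singleton)
  moreover have "measurable (gaussians I) std_gauss = measurable (gaussians I) borel"
    by (rule measurable_cong_sets) auto
  ultimately show ?thesis by simp
next
  case False
  then have "g \<in> space (gaussians I) \<Longrightarrow> g k = undefined" for g
    by (auto simp: space_PiM PiE_def extensional_def)
  then show ?thesis
    by (rule measurable_cong[THEN iffD2]) (auto intro: measurable_const)
qed

lemma integrable_gaussians_component_abs:
  assumes "k \<in> I"
  shows "integrable (gaussians I) (\<lambda>g. \<bar>g k\<bar>)"
proof -
  have "(\<lambda>g. g k) \<in> measurable (gaussians I) std_gauss"
    using assms by (rule measurable_component_singleton)
  moreover have "(\<lambda>x::real. \<bar>x\<bar>) \<in> borel_measurable std_gauss"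
    by (subst measurable_cong_sets[OF sets_std_gauss refl]) simp
  moreover have "integrable (distr (gaussians I) std_gauss (\<lambda>g. g k)) (\<lambda>x. \<bar>x\<bar>)"
    using integrable_std_gauss_abs distr_PiM_component[OF prob_space_std_gauss assms] by simp
  ultimately show ?thesis by (simp add: integrable_distr_eq)
qed

lemma integrable_gaussians_bounded:
  fixes f :: "('i \<Rightarrow> real) \<Rightarrow> real"
  assumes "f \<in> borel_measurable (gaussians I)" "\<And>g. g \<in> space (gaussians I) \<Longrightarrow> \<bar>f g\<bar> \<le> B"
  shows "integrable (gaussians I) f"
proof -
  interpret prob_space "gaussians I" by (rule prob_space_gaussians)
  show ?thesis
    using assms by (intro integrable_const_bound[where B = B]) auto
qed

lemma integrable_gaussians_component_mult:
  assumes "k \<in> I" "\<psi> \<in> borel_measurable (gaussians I)"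
    and "\<And>g. g \<in> space (gaussians I) \<Longrightarrow> \<bar>\<psi> g\<bar> \<le> B"
  shows "integrable (gaussians I) (\<lambda>g. g k * \<psi> g)"
proof (rule Bochner_Integration.integrable_bound[where f = "\<lambda>g. \<bar>g k\<bar> * \<bar>B\<bar>"])
  show "integrable (gaussians I) (\<lambda>g. \<bar>g k\<bar> * \<bar>B\<bar>)"
    using integrable_gaussians_component_abs[OF assms(1)] by simp
  show "AE g in gaussians I. norm (g k * \<psi> g) \<le> norm (\<bar>g k\<bar> * \<bar>B\<bar>)"
  proof (rule AE_I2)
    fix g assume "g \<in> space (gaussians I)"
    from assms(3)[OF this] have "\<bar>\<psi> g\<bar> \<le> \<bar>B\<bar>" by linarith
    then show "norm (g k * \<psi> g) \<le> norm (\<bar>g k\<bar> * \<bar>B\<bar>)"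
      by (simp add: abs_mult mult_left_mono)
  qed
  show "(\<lambda>g. g k * \<psi> g) \<in> borel_measurable (gaussians I)"
    using assms(2) by measurable
qed

lemma gaussians_integration_by_parts:
  fixes \<psi> \<psi>' :: "('i \<Rightarrow> real) \<Rightarrow> real"
  assumes "finite I" "k \<in> I"
    and "\<psi> \<in> borel_measurable (gaussians I)" "\<psi>' \<in> borel_measurable (gaussians I)"
    and M: "\<And>g. g \<in> space (gaussians I) \<Longrightarrow> \<bar>\<psi> g\<bar> \<le> M"
    and M': "\<And>g. g \<in> space (gaussians I) \<Longrightarrow> \<bar>\<psi>' g\<bar> \<le> M'"
    and deriv: "\<And>g y. g \<in> space (gaussians I) \<Longrightarrow>
      ((\<lambda>y. \<psi> (g(k := y))) has_real_derivative \<psi>' (g(k := y))) (at y)"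
    and cont: "\<And>g. g \<in> space (gaussians I) \<Longrightarrow> continuous_on UNIV (\<lambda>y. \<psi>' (g(k := y)))"
  shows "(\<integral>g. g k * \<psi> g \<partial>gaussians I) = (\<integral>g. \<psi>' g \<partial>gaussians I)"
proof -
  define J where "J = I - {k}"
  have I: "I = insert k J" "k \<notin> J" "finite J" using assms(1,2) by (auto simp: J_def)
  have psf: "product_sigma_finite (\<lambda>_::'i. std_gauss)"
    unfolding product_sigma_finite_def by (intro allI prob_space_imp_sigma_finite prob_space_std_gauss)
  have int1: "integrable (gaussians (insert k J)) (\<lambda>g. g k * \<psi> g)"
    using integrable_gaussians_component_mult[OF assms(2,3) M] I(1) by simp
  have int2: "integrable (gaussians (insert k J)) \<psi>'"
    using integrable_gaussians_bounded[OF assms(4) M'] I(1) by simp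
  have "(\<integral>g. g k * \<psi> g \<partial>gaussians I) = (\<integral>x. (\<integral>y. (x(k := y)) k * \<psi> (x(k := y)) \<partial>std_gauss) \<partial>gaussians J)"
    unfolding I(1) by (rule product_sigma_finite.product_integral_insert[OF psf I(3,2) int1])
  also have "\<dots> = (\<integral>x. (\<integral>y. \<psi>' (x(k := y)) \<partial>std_gauss) \<partial>gaussians J)"
  proof (rule Bochner_Integration.integral_cong[OF refl])
    fix x assume "x \<in> space (gaussians J)"
    then have x: "x(k := y) \<in> space (gaussians I)" for y
      using I by (auto simp: space_PiM PiE_def extensional_def)
    have "(\<integral>y. y * \<psi> (x(k := y)) \<partial>std_gauss) = (\<integral>y. \<psi>' (x(k := y)) \<partial>std_gauss)"
      using deriv[OF x] cont[OF x] M[OF x] M'[OF x]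
      by (intro std_gauss_integration_by_parts[where M = M and M' = M']) auto
    then show "(\<integral>y. (x(k := y)) k * \<psi> (x(k := y)) \<partial>std_gauss) = (\<integral>y. \<psi>' (x(k := y)) \<partial>std_gauss)"
      by simp
  qed
  also have "\<dots> = (\<integral>g. \<psi>' g \<partial>gaussians I)"
    unfolding I(1) by (rule product_sigma_finite.product_integral_insert[symmetric, OF psf I(3,2) int2])
  finally show ?thesis .
qed

section \<open>Continuity and differentiation under the integral sign\<close>

lemma continuous_on_integral:
  fixes F :: "real \<Rightarrow> 'a \<Rightarrow> real"
  assumes "finite_measure M"
    and "\<And>x. x \<in> S \<Longrightarrow> F x \<in> borel_measurable M"
    and cont: "\<And>\<omega>. \<omega> \<in> space M \<Longrightarrow> continuous_on S (\<lambda>x. F x \<omega>)"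
    and "\<And>x \<omega>. x \<in> S \<Longrightarrow> \<omega> \<in> space M \<Longrightarrow> \<bar>F x \<omega>\<bar> \<le> B"
  shows "continuous_on S (\<lambda>x. \<integral>\<omega>. F x \<omega> \<partial>M)"
proof (rule continuous_on_sequentiallyI)
  fix u a assume u: "\<forall>n. u n \<in> S" and a: "a \<in> S" and lim: "u \<longlonglongrightarrow> a"
  interpret finite_measure M by fact
  show "(\<lambda>n. \<integral>\<omega>. F (u n) \<omega> \<partial>M) \<longlonglongrightarrow> (\<integral>\<omega>. F a \<omega> \<partial>M)"
  proof (rule integral_dominated_convergence[where w = "\<lambda>_. B"])
    show "AE \<omega> in M. (\<lambda>n. F (u n) \<omega>) \<longlonglongrightarrow> F a \<omega>"
      using continuous_on_tendsto_compose[OF cont lim a] u by (intro AE_I2) simp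
  qed (use assms u a in auto)
qed

lemma tendsto_integral_at:
  fixes F :: "real \<Rightarrow> 'a \<Rightarrow> real"
  assumes "\<And>x. F x \<in> borel_measurable M" "f \<in> borel_measurable M" "integrable M w"
    and lim: "\<And>\<omega>. \<omega> \<in> space M \<Longrightarrow> ((\<lambda>x. F x \<omega>) \<longlongrightarrow> f \<omega>) (at x0)"
    and "\<And>x \<omega>. \<omega> \<in> space M \<Longrightarrow> \<bar>F x \<omega>\<bar> \<le> w \<omega>"
  shows "((\<lambda>x. \<integral>\<omega>. F x \<omega> \<partial>M) \<longlongrightarrow> (\<integral>\<omega>. f \<omega> \<partial>M)) (at x0)"
proof (subst tendsto_at_iff_sequentially, intro allI impI)
  fix X assume X: "\<forall>i. X i \<in> UNIV - {x0}" "X \<longlonglongrightarrow> x0"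
  show "((\<lambda>x. \<integral>\<omega>. F x \<omega> \<partial>M) \<circ> X) \<longlonglongrightarrow> (\<integral>\<omega>. f \<omega> \<partial>M)"
    unfolding comp_def
  proof (rule integral_dominated_convergence[where w = w])
    show "AE \<omega> in M. (\<lambda>i. F (X i) \<omega>) \<longlonglongrightarrow> f \<omega>"
      using lim X by (intro AE_I2) (simp add: tendsto_at_iff_sequentially comp_def)
  qed (use assms in auto)
qed

lemma has_real_derivative_integral:
  fixes F F' :: "real \<Rightarrow> 'a \<Rightarrow> real"
  assumes ab: "a < t0" "t0 < b"
    and int: "\<And>x. x \<in> {a<..<b} \<Longrightarrow> integrable M (F x)"
    and deriv: "\<And>x \<omega>. x \<in> {a<..<b} \<Longrightarrow> \<omega> \<in> space M \<Longrightarrow>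
      ((\<lambda>x. F x \<omega>) has_real_derivative F' x \<omega>) (at x)"
    and "F' t0 \<in> borel_measurable M" "integrable M G"
    and bound: "\<And>x \<omega>. x \<in> {a<..<b} \<Longrightarrow> \<omega> \<in> space M \<Longrightarrow> \<bar>F' x \<omega>\<bar> \<le> G \<omega>"
  shows "((\<lambda>x. \<integral>\<omega>. F x \<omega> \<partial>M) has_real_derivative (\<integral>\<omega>. F' t0 \<omega> \<partial>M)) (at t0)"
proof -
  let ?S = "{a<..<b}"
  have t0: "t0 \<in> ?S" using ab by simp
  \<comment> \<open>The difference quotient, cut off where \<open>t0 + h\<close> leaves \<open>{a<..<b}\<close> so that \<open>G\<close>
    dominates it for every \<open>h\<close>.\<close>
  define Q where "Q h \<omega> = (if t0 + h \<in> ?S then (F (t0 + h) \<omega> - F t0 \<omega>) / h else 0)" for h \<omega>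
  have Q_le: "\<bar>Q h \<omega>\<bar> \<le> G \<omega>" if "\<omega> \<in> space M" for h \<omega>
  proof (cases "t0 + h \<in> ?S \<and> h \<noteq> 0")
    case True
    have "\<bar>F (t0 + h) \<omega> - F t0 \<omega>\<bar> \<le> G \<omega> * \<bar>(t0 + h) - t0\<bar>"
      using field_differentiable_bound[of ?S "\<lambda>x. F x \<omega>" "\<lambda>x. F' x \<omega>" "G \<omega>" "t0 + h" t0]
        True t0 deriv[OF _ that] bound[OF _ that]
      by (auto intro: has_field_derivative_at_within)
    then show ?thesis using True by (simp add: Q_def abs_divide divide_le_eq)
  next
    case False
    then show ?thesis using bound[OF t0 that] by (auto simp: Q_def)
  qed
  have "((\<lambda>h. t0 + h) \<longlongrightarrow> t0 + 0) (at 0)"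
    by (intro tendsto_intros)
  then have near: "\<forall>\<^sub>F h in at 0. t0 + h \<in> ?S"
    using t0 by (auto dest: topological_tendstoD[where S = ?S])
  have "((\<lambda>h. \<integral>\<omega>. Q h \<omega> \<partial>M) \<longlongrightarrow> (\<integral>\<omega>. F' t0 \<omega> \<partial>M)) (at 0)"
  proof (rule tendsto_integral_at[where w = G])
    show "Q h \<in> borel_measurable M" for h
      using int[of "t0 + h"] int[OF t0] by (cases "t0 + h \<in> ?S") (auto simp: Q_def[abs_def])
    show "((\<lambda>h. Q h \<omega>) \<longlongrightarrow> F' t0 \<omega>) (at 0)" if "\<omega> \<in> space M" for \<omega>
    proof (rule Lim_transform_eventually)
      show "((\<lambda>h. (F (t0 + h) \<omega> - F t0 \<omega>) / h) \<longlongrightarrow> F' t0 \<omega>) (at 0)"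
        using deriv[OF t0 that] by (simp add: DERIV_def)
      show "\<forall>\<^sub>F h in at 0. (F (t0 + h) \<omega> - F t0 \<omega>) / h = Q h \<omega>"
        using near by eventually_elim (simp add: Q_def)
    qed
  qed (use assms Q_le in auto)
  moreover have "\<forall>\<^sub>F h in at 0. (\<integral>\<omega>. Q h \<omega> \<partial>M) = ((\<integral>\<omega>. F (t0 + h) \<omega> \<partial>M) - (\<integral>\<omega>. F t0 \<omega> \<partial>M)) / h"
    using near by eventually_elim (use int t0 in \<open>simp add: Q_def Bochner_Integration.integral_diff\<close>)
  ultimately show ?thesis
    unfolding DERIV_def by (rule Lim_transform_eventually)
qed

section \<open>Gaussian interpolation\<close>

lemma sum_fun_upd_mult:
  fixes g a :: "'i \<Rightarrow> real"
  assumes "finite K" "k \<in> K"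
  shows "(\<Sum>k'\<in>K. (g(k := y)) k' * a k') = (\<Sum>k'\<in>K. g k' * a k') + (y - g k) * a k"
  using sum.remove[OF assms, of "\<lambda>k'. (g(k := y)) k' * a k'"] sum.remove[OF assms, of "\<lambda>k'. g k' * a k'"]
    sum.cong[OF refl, of "K - {k}" "\<lambda>k'. (g(k := y)) k' * a k'" "\<lambda>k'. g k' * a k'"]
  by (simp add: algebra_simps)

locale gaussian_interpolation =
  fixes I K :: "'i set" and k0 :: 'i
    and P :: "'s set" and f :: "'s \<Rightarrow> real"
    and E0 :: "('i \<Rightarrow> real) \<Rightarrow> 's \<Rightarrow> real" and A :: "'i \<Rightarrow> 's \<Rightarrow> real" and B C :: "'s \<Rightarrow> real"
    and MA :: "'i \<Rightarrow> real" and MB MC :: real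
  assumes finite_I: "finite I" and K_subset: "K \<subseteq> I" and k0_in: "k0 \<in> I" and k0_notin: "k0 \<notin> K"
    and finite_P: "finite P" and P_nonempty: "P \<noteq> {}" and f_nonneg: "\<And>s. s \<in> P \<Longrightarrow> 0 \<le> f s"
    and E0_measurable: "\<And>s. (\<lambda>g. E0 g s) \<in> borel_measurable (gaussians I)"
    and E0_upd: "\<And>g k y s. k \<in> insert k0 K \<Longrightarrow> E0 (g(k := y)) s = E0 g s"
    and A_bound: "\<And>k s. k \<in> K \<Longrightarrow> s \<in> P \<Longrightarrow> \<bar>A k s\<bar> \<le> MA k"
    and B_bound: "\<And>s. s \<in> P \<Longrightarrow> \<bar>B s\<bar> \<le> MB"
    and C_bound: "\<And>s. s \<in> P \<Longrightarrow> \<bar>C s\<bar> \<le> MC"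
begin

definition energy :: "real \<Rightarrow> ('i \<Rightarrow> real) \<Rightarrow> 's \<Rightarrow> real" where
  "energy t g s = E0 g s + sqrt t * (\<Sum>k\<in>K. g k * A k s) + sqrt (1 - t) * (g k0 * B s) + (1 - t) * C s"

definition avg :: "real \<Rightarrow> ('i \<Rightarrow> real) \<Rightarrow> real" where
  "avg t g = gibbs_mean P (energy t g) f"

definition nu :: "real \<Rightarrow> real" where
  "nu t = (\<integral>g. avg t g \<partial>gaussians I)"

definition energy_deriv :: "real \<Rightarrow> ('i \<Rightarrow> real) \<Rightarrow> 's \<Rightarrow> real" where
  "energy_deriv t g s = (\<Sum>k\<in>K. g k * A k s) / (2 * sqrt t) - g k0 * B s / (2 * sqrt (1 - t)) - C s"

definition energy_deriv_majorant :: "real \<Rightarrow> real \<Rightarrow> ('i \<Rightarrow> real) \<Rightarrow> real" where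
  "energy_deriv_majorant a b g =
     (\<Sum>k\<in>K. \<bar>g k\<bar> * MA k) / (2 * sqrt a) + \<bar>g k0\<bar> * MB / (2 * sqrt (1 - b)) + MC"

definition gronwall_const :: real where
  "gronwall_const = (\<Sum>k\<in>K. (MA k)\<^sup>2) / 2 + 2 * MB\<^sup>2 + 2 * MC"

lemma finite_K: "finite K"
  using finite_subset[OF K_subset finite_I] .

lemma
  shows MA_nonneg: "k \<in> K \<Longrightarrow> 0 \<le> MA k" and MB_nonneg: "0 \<le> MB" and MC_nonneg: "0 \<le> MC"
proof -
  obtain s where "s \<in> P" using P_nonempty by blast
  then show "k \<in> K \<Longrightarrow> 0 \<le> MA k" "0 \<le> MB" "0 \<le> MC"
    using A_bound[of k s] B_bound[of s] C_bound[of s] by fastforce+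
qed

lemma gronwall_const_nonneg: "0 \<le> gronwall_const"
  unfolding gronwall_const_def using MB_nonneg MC_nonneg by (auto intro!: add_nonneg_nonneg sum_nonneg)

lemma energy_measurable: "(\<lambda>g. energy t g s) \<in> borel_measurable (gaussians I)"
  unfolding energy_def using E0_measurable[of s] by measurable

lemma energy_deriv_measurable: "(\<lambda>g. energy_deriv t g s) \<in> borel_measurable (gaussians I)"
  unfolding energy_deriv_def by measurable

lemma avg_measurable: "avg t \<in> borel_measurable (gaussians I)"
  unfolding avg_def[abs_def] by (rule gibbs_mean_measurable) (rule energy_measurable, simp)

lemma avg_nonneg: "0 \<le> avg t g"
  unfolding avg_def using finite_P P_nonempty f_nonneg by (rule gibbs_mean_nonneg)

lemma avg_abs_le: "\<bar>avg t g\<bar> \<le> sum f P"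
  using avg_nonneg gibbs_mean_le_sum[OF finite_P P_nonempty f_nonneg] by (simp add: avg_def)

lemma integrable_avg: "integrable (gaussians I) (avg t)"
  by (rule integrable_gaussians_bounded[OF avg_measurable avg_abs_le])

lemma nu_nonneg: "0 \<le> nu t"
  unfolding nu_def using avg_nonneg by simp

lemma continuous_on_nu: "continuous_on {0..1} nu"
  unfolding nu_def
proof (rule continuous_on_integral)
  show "finite_measure (gaussians I)"
    using prob_space_gaussians by (rule prob_space.finite_measure)
  show "continuous_on {0..1} (\<lambda>x. avg x g)" for g
    unfolding avg_def energy_def by (intro continuous_on_gibbs_mean finite_P P_nonempty continuous_intros)
qed (use avg_measurable avg_abs_le in auto)

lemma energy_has_derivative:
  assumes "0 < t" "t < 1"
  shows "((\<lambda>x. energy x g s) has_real_derivative energy_deriv t g s) (at t)"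
  unfolding energy_def[abs_def] energy_deriv_def using assms
  by (auto intro!: derivative_eq_intros simp: field_simps)

lemma avg_has_derivative:
  assumes "0 < t" "t < 1"
  shows "((\<lambda>x. avg x g) has_real_derivative gibbs_cov P (energy t g) f (energy_deriv t g)) (at t)"
  unfolding avg_def gibbs_cov_def
  by (rule gibbs_mean_has_derivative[OF finite_P P_nonempty energy_has_derivative[OF assms]])

lemma energy_deriv_abs_le:
  assumes "0 < a" "a < x" "x < b" "b < 1" "s \<in> P"
  shows "\<bar>energy_deriv x g s\<bar> \<le> energy_deriv_majorant a b g"
proof -
  have sqrt: "0 < sqrt a" "sqrt a \<le> sqrt x" "0 < sqrt (1 - b)" "sqrt (1 - b) \<le> sqrt (1 - x)"
    using assms by auto
  have S: "\<bar>\<Sum>k\<in>K. g k * A k s\<bar> \<le> (\<Sum>k\<in>K. \<bar>g k\<bar> * MA k)"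
    using A_bound assms(5)
    by (intro order_trans[OF sum_abs sum_mono]) (auto intro!: mult_left_mono simp: abs_mult)
  have "\<bar>(\<Sum>k\<in>K. g k * A k s) / (2 * sqrt x)\<bar> \<le> (\<Sum>k\<in>K. \<bar>g k\<bar> * MA k) / (2 * sqrt x)"
    using S sqrt by (simp add: abs_divide divide_right_mono)
  also have "\<dots> \<le> (\<Sum>k\<in>K. \<bar>g k\<bar> * MA k) / (2 * sqrt a)"
    using sqrt MA_nonneg by (intro divide_left_mono sum_nonneg) auto
  finally have 1: "\<bar>(\<Sum>k\<in>K. g k * A k s) / (2 * sqrt x)\<bar> \<le> (\<Sum>k\<in>K. \<bar>g k\<bar> * MA k) / (2 * sqrt a)" .
  have "\<bar>g k0 * B s / (2 * sqrt (1 - x))\<bar> \<le> \<bar>g k0\<bar> * MB / (2 * sqrt (1 - x))"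
    using B_bound[OF assms(5)] sqrt by (simp add: abs_divide abs_mult divide_right_mono mult_left_mono)
  also have "\<dots> \<le> \<bar>g k0\<bar> * MB / (2 * sqrt (1 - b))"
    using sqrt MB_nonneg by (intro divide_left_mono) auto
  finally have 2: "\<bar>g k0 * B s / (2 * sqrt (1 - x))\<bar> \<le> \<bar>g k0\<bar> * MB / (2 * sqrt (1 - b))" .
  show ?thesis
    unfolding energy_deriv_def energy_deriv_majorant_def using 1 2 C_bound[OF assms(5)] by linarith
qed

lemma integrable_energy_deriv_majorant: "integrable (gaussians I) (energy_deriv_majorant a b)"
  unfolding energy_deriv_majorant_def[abs_def]
  using K_subset k0_in prob_space.finite_measure[OF prob_space_gaussians]
  by (intro Bochner_Integration.integrable_add integrable_divide_zero Bochner_Integration.integrable_sum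
      integrable_mult_left integrable_gaussians_component_abs finite_measure.integrable_const) auto

lemma nu_has_derivative:
  assumes "0 < t" "t < 1"
  shows "(nu has_real_derivative (\<integral>g. gibbs_cov P (energy t g) f (energy_deriv t g) \<partial>gaussians I)) (at t)"
  unfolding nu_def
proof (rule has_real_derivative_integral[where a = "t / 2" and b = "(1 + t) / 2"
      and G = "\<lambda>g. 2 * energy_deriv_majorant (t / 2) ((1 + t) / 2) g * sum f P"])
  show "\<bar>gibbs_cov P (energy x g) f (energy_deriv x g)\<bar> \<le> 2 * energy_deriv_majorant (t / 2) ((1 + t) / 2) g * sum f P"
    if "x \<in> {t / 2<..<(1 + t) / 2}" for x g
    using that assms by (intro gibbs_cov_abs_le finite_P P_nonempty f_nonneg energy_deriv_abs_le) auto
qed (use assms integrable_energy_deriv_majorant in \<open>auto intro: integrable_avg avg_has_derivative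
    gibbs_cov_measurable energy_measurable energy_deriv_measurable\<close>)

lemma integrable_gibbs_cov:
  assumes "\<And>s. s \<in> P \<Longrightarrow> \<bar>D s\<bar> \<le> M"
  shows "integrable (gaussians I) (\<lambda>g. gibbs_cov P (energy t g) f D)"
  using assms by (intro integrable_gaussians_bounded[where B = "2 * M * sum f P"] gibbs_cov_measurable
      energy_measurable gibbs_cov_abs_le finite_P P_nonempty f_nonneg) auto

lemma integrable_gibbs_cov_deriv:
  assumes "\<And>s. s \<in> P \<Longrightarrow> \<bar>D s\<bar> \<le> M"
  shows "integrable (gaussians I) (\<lambda>g. gibbs_cov_deriv P (energy t g) f D)"
  using assms by (intro integrable_gaussians_bounded[where B = "4 * M\<^sup>2 * sum f P"]
      gibbs_cov_deriv_measurable energy_measurable gibbs_cov_deriv_abs_le finite_P P_nonempty f_nonneg) auto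

lemma integrable_component_mult_gibbs_cov:
  assumes "k \<in> I" "\<And>s. s \<in> P \<Longrightarrow> \<bar>D s\<bar> \<le> M"
  shows "integrable (gaussians I) (\<lambda>g. g k * gibbs_cov P (energy t g) f D)"
  using assms by (intro integrable_gaussians_component_mult[where B = "2 * M * sum f P"]
      gibbs_cov_measurable energy_measurable gibbs_cov_abs_le finite_P P_nonempty f_nonneg) auto

lemma integral_component_mult_gibbs_cov:
  assumes "k \<in> I" and D: "\<And>s. s \<in> P \<Longrightarrow> \<bar>D s\<bar> \<le> M"
    and upd: "\<And>g y. energy t (g(k := y)) = (\<lambda>s. (energy t g s - g k * (c * D s)) + y * (c * D s))"
  shows "(\<integral>g. g k * gibbs_cov P (energy t g) f D \<partial>gaussians I)
       = (\<integral>g. c * gibbs_cov_deriv P (energy t g) f D \<partial>gaussians I)"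
proof (rule gaussians_integration_by_parts[OF finite_I \<open>k \<in> I\<close>])
  show "\<bar>gibbs_cov P (energy t g) f D\<bar> \<le> 2 * M * sum f P" for g
    using D by (intro gibbs_cov_abs_le finite_P P_nonempty f_nonneg)
  show "\<bar>c * gibbs_cov_deriv P (energy t g) f D\<bar> \<le> \<bar>c\<bar> * (4 * M\<^sup>2 * sum f P)" for g
    unfolding abs_mult using D by (intro mult_left_mono gibbs_cov_deriv_abs_le finite_P P_nonempty f_nonneg) auto
  show "((\<lambda>y. gibbs_cov P (energy t (g(k := y))) f D) has_real_derivative
      c * gibbs_cov_deriv P (energy t (g(k := y))) f D) (at y)" for g y
    unfolding upd by (rule gibbs_cov_has_derivative_dir[OF finite_P P_nonempty])
  show "continuous_on UNIV (\<lambda>y. c * gibbs_cov_deriv P (energy t (g(k := y))) f D)" for g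
    unfolding upd by (intro continuous_intros continuous_on_gibbs_cov_deriv_dir[OF finite_P P_nonempty])
  show "(\<lambda>g. c * gibbs_cov_deriv P (energy t g) f D) \<in> borel_measurable (gaussians I)"
    by (intro borel_measurable_times borel_measurable_const gibbs_cov_deriv_measurable energy_measurable)
qed (auto intro: gibbs_cov_measurable energy_measurable)

lemma energy_upd_K:
  assumes "k \<in> K"
  shows "energy t (g(k := y)) = (\<lambda>s. (energy t g s - g k * (sqrt t * A k s)) + y * (sqrt t * A k s))"
proof
  fix s
  have "k0 \<noteq> k" using assms k0_notin by blast
  then show "energy t (g(k := y)) s = (energy t g s - g k * (sqrt t * A k s)) + y * (sqrt t * A k s)"
    using assms unfolding energy_def sum_fun_upd_mult[OF finite_K assms]
    by (simp add: E0_upd algebra_simps)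
qed

lemma energy_upd_k0:
  "energy t (g(k0 := y)) = (\<lambda>s. (energy t g s - g k0 * (sqrt (1 - t) * B s)) + y * (sqrt (1 - t) * B s))"
proof
  fix s
  have "(\<Sum>k\<in>K. (g(k0 := y)) k * A k s) = (\<Sum>k\<in>K. g k * A k s)"
    using k0_notin by (intro sum.cong) auto
  then show "energy t (g(k0 := y)) s = (energy t g s - g k0 * (sqrt (1 - t) * B s)) + y * (sqrt (1 - t) * B s)"
    by (simp add: energy_def E0_upd algebra_simps)
qed

lemma gibbs_cov_energy_deriv:
  "gibbs_cov P E f (energy_deriv t g)
     = (\<Sum>k\<in>K. g k * gibbs_cov P E f (A k)) / (2 * sqrt t)
       - g k0 * gibbs_cov P E f B / (2 * sqrt (1 - t)) - gibbs_cov P E f C"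
proof -
  have "energy_deriv t g
      = (\<lambda>s. (\<Sum>k\<in>K. (g k / (2 * sqrt t)) * A k s) - (g k0 / (2 * sqrt (1 - t))) * B s - C s)"
    unfolding energy_deriv_def by (simp add: sum_divide_distrib)
  then show ?thesis
    by (simp only: gibbs_cov_diff_right gibbs_cov_sum_right gibbs_cov_cmult_right)
      (simp add: sum_divide_distrib)
qed

lemma integral_gibbs_cov_energy_deriv:
  assumes "0 < t" "t < 1"
  shows "(\<integral>g. gibbs_cov P (energy t g) f (energy_deriv t g) \<partial>gaussians I)
     = (\<Sum>k\<in>K. \<integral>g. gibbs_cov_deriv P (energy t g) f (A k) \<partial>gaussians I) / 2
       - (\<integral>g. gibbs_cov_deriv P (energy t g) f B \<partial>gaussians I) / 2
       - (\<integral>g. gibbs_cov P (energy t g) f C \<partial>gaussians I)"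
proof -
  have int_A: "integrable (gaussians I) (\<lambda>g. g k * gibbs_cov P (energy t g) f (A k))" if "k \<in> K" for k
    using that K_subset A_bound by (intro integrable_component_mult_gibbs_cov) auto
  have int_B: "integrable (gaussians I) (\<lambda>g. g k0 * gibbs_cov P (energy t g) f B)"
    using k0_in B_bound by (rule integrable_component_mult_gibbs_cov)
  have int_C: "integrable (gaussians I) (\<lambda>g. gibbs_cov P (energy t g) f C)"
    using C_bound by (rule integrable_gibbs_cov)
  have ibp_A: "(\<integral>g. g k * gibbs_cov P (energy t g) f (A k) \<partial>gaussians I)
      = sqrt t * (\<integral>g. gibbs_cov_deriv P (energy t g) f (A k) \<partial>gaussians I)" if "k \<in> K" for k
    using that K_subset A_bound energy_upd_K
    by (subst integral_component_mult_gibbs_cov[where c = "sqrt t"]) auto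
  have ibp_B: "(\<integral>g. g k0 * gibbs_cov P (energy t g) f B \<partial>gaussians I)
      = sqrt (1 - t) * (\<integral>g. gibbs_cov_deriv P (energy t g) f B \<partial>gaussians I)"
    using k0_in B_bound energy_upd_k0
    by (subst integral_component_mult_gibbs_cov[where c = "sqrt (1 - t)"]) auto
  have "(\<integral>g. gibbs_cov P (energy t g) f (energy_deriv t g) \<partial>gaussians I)
      = (\<Sum>k\<in>K. \<integral>g. g k * gibbs_cov P (energy t g) f (A k) \<partial>gaussians I) / (2 * sqrt t)
        - (\<integral>g. g k0 * gibbs_cov P (energy t g) f B \<partial>gaussians I) / (2 * sqrt (1 - t))
        - (\<integral>g. gibbs_cov P (energy t g) f C \<partial>gaussians I)"
    unfolding gibbs_cov_energy_deriv using int_A int_B int_C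
    by (simp add: Bochner_Integration.integral_diff Bochner_Integration.integral_sum
        Bochner_Integration.integrable_sum)
  then show ?thesis
    using assms by (simp add: ibp_A ibp_B sum_distrib_left[symmetric])
qed

lemma integral_le_mult_nu:
  assumes "integrable (gaussians I) F" "\<And>g. F g \<le> c * avg t g"
  shows "(\<integral>g. F g \<partial>gaussians I) \<le> c * nu t"
proof -
  have "(\<integral>g. F g \<partial>gaussians I) \<le> (\<integral>g. c * avg t g \<partial>gaussians I)"
    using assms integrable_avg by (intro integral_mono) auto
  then show ?thesis unfolding nu_def by simp
qed

lemma integral_gibbs_cov_energy_deriv_ge:
  assumes "0 < t" "t < 1"
  shows "- gronwall_const * nu t \<le> (\<integral>g. gibbs_cov P (energy t g) f (energy_deriv t g) \<partial>gaussians I)"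
proof -
  note gibbs = finite_P P_nonempty f_nonneg
  have "(\<integral>g. - gibbs_cov_deriv P (energy t g) f (A k) \<partial>gaussians I) \<le> (MA k)\<^sup>2 * nu t" if "k \<in> K" for k
  proof (rule integral_le_mult_nu)
    show "integrable (gaussians I) (\<lambda>g. - gibbs_cov_deriv P (energy t g) f (A k))"
      using A_bound[OF that] by (intro integrable_minus integrable_gibbs_cov_deriv)
    have "- ((MA k)\<^sup>2 * avg t g) \<le> gibbs_cov_deriv P (energy t g) f (A k)" for g
      unfolding avg_def using A_bound[OF that] gibbs by (intro gibbs_cov_deriv_ge) auto
    then show "- gibbs_cov_deriv P (energy t g) f (A k) \<le> (MA k)\<^sup>2 * avg t g" for g
      by (simp add: minus_le_iff)
  qed
  then have "(\<Sum>k\<in>K. \<integral>g. - gibbs_cov_deriv P (energy t g) f (A k) \<partial>gaussians I) \<le> (\<Sum>k\<in>K. (MA k)\<^sup>2 * nu t)"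
    by (rule sum_mono)
  then have A: "- ((\<Sum>k\<in>K. (MA k)\<^sup>2) * nu t) \<le> (\<Sum>k\<in>K. \<integral>g. gibbs_cov_deriv P (energy t g) f (A k) \<partial>gaussians I)"
    by (simp add: sum_distrib_right sum_negf)
  have B: "(\<integral>g. gibbs_cov_deriv P (energy t g) f B \<partial>gaussians I) \<le> 4 * MB\<^sup>2 * nu t"
    using B_bound gibbs
    by (intro integral_le_mult_nu integrable_gibbs_cov_deriv) (auto simp: avg_def intro!: gibbs_cov_deriv_le)
  have C: "(\<integral>g. gibbs_cov P (energy t g) f C \<partial>gaussians I) \<le> 2 * MC * nu t"
    using C_bound gibbs
    by (intro integral_le_mult_nu integrable_gibbs_cov) (auto simp: avg_def intro!: gibbs_cov_le)
  show ?thesis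
    unfolding integral_gibbs_cov_energy_deriv[OF assms] gronwall_const_def using A B C
    by (simp add: algebra_simps)
qed

lemma nu_le_exp_nu_1:
  assumes "0 \<le> t" "t \<le> 1"
  shows "nu t \<le> exp (gronwall_const * (1 - t)) * nu 1"
proof -
  define w where "w x = exp (gronwall_const * x) * nu x" for x
  have "w t \<le> w 1"
  proof (rule DERIV_nonneg_imp_increasing_open[OF assms(2)])
    fix x assume x: "t < x" "x < 1"
    then have "0 < x" using assms by simp
    let ?D = "\<integral>g. gibbs_cov P (energy x g) f (energy_deriv x g) \<partial>gaussians I"
    have "(w has_real_derivative exp (gronwall_const * x) * (gronwall_const * nu x + ?D)) (at x)"
      unfolding w_def[abs_def]
      by (rule derivative_eq_intros nu_has_derivative[OF \<open>0 < x\<close> x(2)] refl | simp add: algebra_simps)+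
    moreover have "0 \<le> gronwall_const * nu x + ?D"
      using integral_gibbs_cov_energy_deriv_ge[OF \<open>0 < x\<close> x(2)] by simp
    ultimately show "\<exists>y. (w has_real_derivative y) (at x) \<and> 0 \<le> y" by auto
  next
    show "continuous_on {t..1} w"
      unfolding w_def[abs_def] using assms
      by (intro continuous_intros continuous_on_subset[OF continuous_on_nu]) auto
  qed
  then have "exp (- (gronwall_const * t)) * w t \<le> exp (- (gronwall_const * t)) * w 1"
    by simp
  then show ?thesis
    unfolding w_def by (simp add: mult.assoc[symmetric] exp_add[symmetric] algebra_simps)
qed

end

section \<open>Bounds on the fixed point\<close>

lemma integral_le_const_prob_space:
  fixes F :: "'a \<Rightarrow> real"
  assumes "prob_space M" "\<And>x. x \<in> space M \<Longrightarrow> F x \<le> c" "0 \<le> c"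
  shows "integral\<^sup>L M F \<le> c"
proof (cases "integrable M F")
  case True
  then show ?thesis
    using assms by (intro prob_space.integral_le_const) auto
qed (use assms(3) in \<open>simp add: not_integrable_integral_eq\<close>)

lemma abs_sinh_le_cosh: "\<bar>sinh x\<bar> \<le> cosh (x :: real)"
  using sinh_le_cosh_real[of x] sinh_le_cosh_real[of "- x"] by simp

lemma weighted_square_mean_bounds:
  fixes w :: "nat \<Rightarrow> real"
  assumes "\<And>\<gamma>. 0 \<le> w \<gamma>"
  shows "0 \<le> (\<Sum>\<gamma>\<in>{1..S}. (real \<gamma>)\<^sup>2 * w \<gamma>) / (1 + (\<Sum>\<gamma>\<in>{1..S}. w \<gamma>))"
    and "(\<Sum>\<gamma>\<in>{1..S}. (real \<gamma>)\<^sup>2 * w \<gamma>) / (1 + (\<Sum>\<gamma>\<in>{1..S}. w \<gamma>)) \<le> (real S)\<^sup>2"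
proof -
  have Z: "0 < 1 + (\<Sum>\<gamma>\<in>{1..S}. w \<gamma>)" using assms by (smt (verit) sum_nonneg)
  have "(\<Sum>\<gamma>\<in>{1..S}. (real \<gamma>)\<^sup>2 * w \<gamma>) \<le> (\<Sum>\<gamma>\<in>{1..S}. (real S)\<^sup>2 * w \<gamma>)"
    using assms by (intro sum_mono mult_right_mono) auto
  also have "\<dots> \<le> (real S)\<^sup>2 * (1 + (\<Sum>\<gamma>\<in>{1..S}. w \<gamma>))"
    by (simp add: sum_distrib_left[symmetric] distrib_left)
  finally show "(\<Sum>\<gamma>\<in>{1..S}. (real \<gamma>)\<^sup>2 * w \<gamma>) / (1 + (\<Sum>\<gamma>\<in>{1..S}. w \<gamma>)) \<le> (real S)\<^sup>2"
    using Z by (simp add: divide_le_eq)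
  show "0 \<le> (\<Sum>\<gamma>\<in>{1..S}. (real \<gamma>)\<^sup>2 * w \<gamma>) / (1 + (\<Sum>\<gamma>\<in>{1..S}. w \<gamma>))"
    using assms Z by (intro divide_nonneg_pos sum_nonneg) auto
qed

lemma weighted_mean_abs_le:
  fixes v w :: "nat \<Rightarrow> real"
  assumes "\<And>\<gamma>. \<bar>v \<gamma>\<bar> \<le> w \<gamma>"
  shows "\<bar>(\<Sum>\<gamma>\<in>{1..S}. real \<gamma> * v \<gamma>) / (1 + (\<Sum>\<gamma>\<in>{1..S}. w \<gamma>))\<bar> \<le> real S"
proof -
  have w: "0 \<le> w \<gamma>" for \<gamma> using assms[of \<gamma>] by linarith
  have Z: "0 < 1 + (\<Sum>\<gamma>\<in>{1..S}. w \<gamma>)" using w by (smt (verit) sum_nonneg)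
  have "\<bar>\<Sum>\<gamma>\<in>{1..S}. real \<gamma> * v \<gamma>\<bar> \<le> (\<Sum>\<gamma>\<in>{1..S}. real S * w \<gamma>)"
    using assms w by (intro order_trans[OF sum_abs sum_mono]) (auto simp: abs_mult intro: mult_mono)
  also have "\<dots> \<le> real S * (1 + (\<Sum>\<gamma>\<in>{1..S}. w \<gamma>))"
    by (simp add: sum_distrib_left[symmetric] distrib_left)
  finally show ?thesis
    using Z by (simp add: abs_divide divide_le_eq)
qed

lemma fp_system_bounds:
  assumes "fp_system S \<beta> D h p q"
  shows "0 \<le> p" "p \<le> (real S)\<^sup>2" "0 \<le> q" "q \<le> (real S)\<^sup>2"
proof -
  define e where "e \<gamma> = exp ((real \<gamma>)\<^sup>2 * (D + \<beta>\<^sup>2 / 2 * (p - q)))" for \<gamma>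
  define w where "w x \<gamma> = 2 * cosh (real \<gamma> * (sqrt q * \<beta> * x + h)) * e \<gamma>" for x \<gamma>
  define v where "v x \<gamma> = 2 * sinh (real \<gamma> * (sqrt q * \<beta> * x + h)) * e \<gamma>" for x \<gamma>
  have w_nonneg: "0 \<le> w x \<gamma>" for x \<gamma>
    by (simp add: w_def e_def)
  have v_le_w: "\<bar>v x \<gamma>\<bar> \<le> w x \<gamma>" for x \<gamma>
    unfolding v_def w_def e_def by (simp add: abs_mult abs_sinh_le_cosh)
  have p: "p = (\<integral>x. (\<Sum>\<gamma>\<in>{1..S}. (real \<gamma>)\<^sup>2 * w x \<gamma>) / (1 + (\<Sum>\<gamma>\<in>{1..S}. w x \<gamma>)) \<partial>std_gauss)"
    and q: "q = (\<integral>x. ((\<Sum>\<gamma>\<in>{1..S}. real \<gamma> * v x \<gamma>) / (1 + (\<Sum>\<gamma>\<in>{1..S}. w x \<gamma>)))\<^sup>2 \<partial>std_gauss)"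
    using assms unfolding fp_system_def fp_denom_def w_def v_def e_def by (simp_all add: mult.assoc)
  have sq: "((\<Sum>\<gamma>\<in>{1..S}. real \<gamma> * v x \<gamma>) / (1 + (\<Sum>\<gamma>\<in>{1..S}. w x \<gamma>)))\<^sup>2 \<le> (real S)\<^sup>2" for x
    using weighted_mean_abs_le[of "v x" "w x" S] v_le_w by (metis abs_ge_zero power2_abs power_mono)
  show "0 \<le> p" "p \<le> (real S)\<^sup>2" "0 \<le> q" "q \<le> (real S)\<^sup>2"
    unfolding p q using weighted_square_mean_bounds[OF w_nonneg] sq
    by (auto intro!: Bochner_Integration.integral_nonneg integral_le_const_prob_space prob_space_std_gauss)
qed

section \<open>The cavity interpolation\<close>

lemma gibbs_avg_eq_gibbs_mean:
  assumes "finite C"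
  shows "gibbs_avg C H n f = gibbs_mean (PiE {1..n} (\<lambda>_. C)) (\<lambda>\<sigma>s. \<Sum>l\<in>{1..n}. H (\<sigma>s l)) f"
proof -
  have "(\<Sum>\<sigma>\<in>C. exp (H \<sigma>)) ^ n = (\<Prod>l\<in>{1..n}. \<Sum>\<sigma>\<in>C. exp (H \<sigma>))"
    by simp
  also have "\<dots> = (\<Sum>\<sigma>s\<in>PiE {1..n} (\<lambda>_. C). \<Prod>l\<in>{1..n}. exp (H (\<sigma>s l)))"
    using assms by (intro prod_sum_PiE) auto
  finally show ?thesis
    unfolding gibbs_avg_def gibbs_mean_def by (simp add: exp_sum)
qed

lemma finite_pairs: "finite (pairs N)"
  by (rule finite_subset[of _ "{1..N} \<times> {1..N}"]) (auto simp: pairs_def)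

lemma finite_replicas: "finite (replicas S N n)"
  unfolding replicas_def configs_def spins_def by (intro finite_PiE) auto

lemma replicas_nonempty: "replicas S N n \<noteq> {}"
  unfolding replicas_def configs_def spins_def by (auto simp: PiE_eq_empty_iff)

lemma replicas_abs_le:
  assumes "\<sigma>s \<in> replicas S N n" "l \<in> {1..n}" "j \<in> {1..N}"
  shows "\<bar>real_of_int (\<sigma>s l j)\<bar> \<le> real S"
proof -
  have "\<sigma>s l \<in> configs S N" using assms(1,2) by (auto simp: replicas_def)
  then have "\<sigma>s l j \<in> spins S" using assms(3) by (auto simp: configs_def)
  then show ?thesis by (auto simp: spins_def)
qed

definition cavity_edges :: "nat \<Rightarrow> (nat \<times> nat) option set" where
  "cavity_edges N = (\<lambda>i. Some (i, N)) ` {1..<N}"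

definition cavity_base ::
  "real \<Rightarrow> real \<Rightarrow> real \<Rightarrow> nat \<Rightarrow> nat \<Rightarrow> ((nat \<times> nat) option \<Rightarrow> real) \<Rightarrow> (nat \<Rightarrow> nat \<Rightarrow> int) \<Rightarrow> real" where
  "cavity_base \<beta> D h N n g \<sigma>s = (\<Sum>l\<in>{1..n}.
     (\<beta> / sqrt N) * (\<Sum>(i, j)\<in>pairs (N - 1). g (Some (i, j)) * \<sigma>s l i * \<sigma>s l j)
     + D * (\<Sum>i\<in>{1..N - 1}. (\<sigma>s l i)\<^sup>2) + h * (\<Sum>i\<in>{1..N - 1}. \<sigma>s l i)
     + D * (\<sigma>s l N)\<^sup>2 + h * \<sigma>s l N)"

definition cavity_coupling :: "real \<Rightarrow> nat \<Rightarrow> nat \<Rightarrow> (nat \<times> nat) option \<Rightarrow> (nat \<Rightarrow> nat \<Rightarrow> int) \<Rightarrow> real" where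
  "cavity_coupling \<beta> N n k \<sigma>s =
     (case k of Some (i, _) \<Rightarrow> (\<Sum>l\<in>{1..n}. (\<beta> / sqrt N) * \<sigma>s l N * \<sigma>s l i) | None \<Rightarrow> 0)"

definition cavity_field :: "real \<Rightarrow> real \<Rightarrow> nat \<Rightarrow> nat \<Rightarrow> (nat \<Rightarrow> nat \<Rightarrow> int) \<Rightarrow> real" where
  "cavity_field \<beta> q N n \<sigma>s = (\<Sum>l\<in>{1..n}. \<beta> * sqrt q * \<sigma>s l N)"

definition cavity_correction :: "real \<Rightarrow> real \<Rightarrow> real \<Rightarrow> nat \<Rightarrow> nat \<Rightarrow> (nat \<Rightarrow> nat \<Rightarrow> int) \<Rightarrow> real" where
  "cavity_correction \<beta> p q N n \<sigma>s = (\<Sum>l\<in>{1..n}. (\<beta>\<^sup>2 / 2) * (p - q) * (\<sigma>s l N)\<^sup>2)"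

lemma sum_cavity_edges:
  "(\<Sum>k\<in>cavity_edges N. g k * cavity_coupling \<beta> N n k \<sigma>s)
     = (\<Sum>l\<in>{1..n}. \<sigma>s l N * ((\<beta> / sqrt N) * (\<Sum>i\<in>{1..<N}. g (Some (i, N)) * \<sigma>s l i)))"
proof -
  have "inj_on (\<lambda>i. Some (i, N)) {1..<N}" by (auto simp: inj_on_def)
  then have "(\<Sum>k\<in>cavity_edges N. g k * cavity_coupling \<beta> N n k \<sigma>s)
      = (\<Sum>i\<in>{1..<N}. \<Sum>l\<in>{1..n}. g (Some (i, N)) * ((\<beta> / sqrt N) * \<sigma>s l N * \<sigma>s l i))"
    by (simp add: cavity_edges_def sum.reindex cavity_coupling_def sum_distrib_left)
  also have "\<dots> = (\<Sum>l\<in>{1..n}. \<sigma>s l N * ((\<beta> / sqrt N) * (\<Sum>i\<in>{1..<N}. g (Some (i, N)) * \<sigma>s l i)))"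
    by (subst sum.swap) (simp add: sum_distrib_left mult_ac)
  finally show ?thesis .
qed

lemma sum_H_t_replicas:
  "(\<Sum>l\<in>{1..n}. H_t \<beta> D h p q N t g (\<sigma>s l)) =
     cavity_base \<beta> D h N n g \<sigma>s + sqrt t * (\<Sum>k\<in>cavity_edges N. g k * cavity_coupling \<beta> N n k \<sigma>s)
     + sqrt (1 - t) * (g None * cavity_field \<beta> q N n \<sigma>s) + (1 - t) * cavity_correction \<beta> p q N n \<sigma>s"
  unfolding sum_cavity_edges H_t_def cavity_base_def cavity_field_def cavity_correction_def
  by (simp add: sum.distrib sum_distrib_left algebra_simps)

lemma abs_sum_le_card_mult:
  fixes F :: "'a \<Rightarrow> real"
  assumes "\<And>l. l \<in> L \<Longrightarrow> \<bar>F l\<bar> \<le> M"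
  shows "\<bar>\<Sum>l\<in>L. F l\<bar> \<le> real (card L) * M"
  using order_trans[OF sum_abs sum_bounded_above[of L "\<lambda>l. \<bar>F l\<bar>" M]] assms by simp

locale cavity_model =
  fixes S N n :: nat and \<beta> D h p q :: real and f :: "(nat \<Rightarrow> nat \<Rightarrow> int) \<Rightarrow> real"
  assumes N_pos: "1 \<le> N" and n_pos: "1 \<le> n" and \<beta>_nonneg: "0 \<le> \<beta>"
    and p_bounds: "0 \<le> p" "p \<le> (real S)\<^sup>2" and q_bounds: "0 \<le> q" "q \<le> (real S)\<^sup>2"
    and f_nonneg_replicas: "\<forall>\<sigma>s\<in>replicas S N n. 0 \<le> f \<sigma>s"
begin

lemma cavity_base_upd:
  assumes "k \<in> insert None (cavity_edges N)"
  shows "cavity_base \<beta> D h N n (g(k := y)) \<sigma>s = cavity_base \<beta> D h N n g \<sigma>s"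
  using assms N_pos unfolding cavity_base_def
  by (intro sum.cong refl arg_cong2[where f = "(+)"] arg_cong2[where f = "(*)"])
    (auto simp: cavity_edges_def pairs_def)

lemma cavity_coupling_abs_le:
  assumes k: "k \<in> cavity_edges N" and \<sigma>s: "\<sigma>s \<in> replicas S N n"
  shows "\<bar>cavity_coupling \<beta> N n k \<sigma>s\<bar> \<le> real n * (\<beta> * (real S)\<^sup>2 / sqrt N)"
proof -
  obtain i where i: "k = Some (i, N)" "i \<in> {1..<N}" using k unfolding cavity_edges_def by blast
  have "\<bar>\<Sum>l\<in>{1..n}. \<beta> / sqrt N * \<sigma>s l N * \<sigma>s l i\<bar> \<le> real (card {1..n}) * (\<beta> * (real S)\<^sup>2 / sqrt N)"
  proof (rule abs_sum_le_card_mult)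
    fix l assume l: "l \<in> {1..n}"
    have "\<bar>real_of_int (\<sigma>s l N)\<bar> * \<bar>real_of_int (\<sigma>s l i)\<bar> \<le> real S * real S"
      using replicas_abs_le[OF \<sigma>s l] i N_pos by (intro mult_mono) auto
    then have "\<beta> / sqrt N * (\<bar>real_of_int (\<sigma>s l N)\<bar> * \<bar>real_of_int (\<sigma>s l i)\<bar>) \<le> \<beta> / sqrt N * (real S * real S)"
      using \<beta>_nonneg by (intro mult_left_mono) auto
    then show "\<bar>\<beta> / sqrt N * \<sigma>s l N * \<sigma>s l i\<bar> \<le> \<beta> * (real S)\<^sup>2 / sqrt N"
      using \<beta>_nonneg by (simp add: abs_mult power2_eq_square mult_ac)
  qed
  then show ?thesis
    unfolding cavity_coupling_def i by simp
qed

lemma cavity_field_abs_le: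
  assumes "\<sigma>s \<in> replicas S N n"
  shows "\<bar>cavity_field \<beta> q N n \<sigma>s\<bar> \<le> real n * (\<beta> * sqrt q * real S)"
  unfolding cavity_field_def using replicas_abs_le[OF assms] N_pos \<beta>_nonneg q_bounds
  by (intro order_trans[OF abs_sum_le_card_mult[where M = "\<beta> * sqrt q * real S"]]) (auto simp: abs_mult intro!: mult_left_mono)

lemma cavity_correction_abs_le:
  assumes "\<sigma>s \<in> replicas S N n"
  shows "\<bar>cavity_correction \<beta> p q N n \<sigma>s\<bar> \<le> real n * (\<beta>\<^sup>2 / 2 * \<bar>p - q\<bar> * (real S)\<^sup>2)"
  unfolding cavity_correction_def using replicas_abs_le[OF assms] N_pos
  by (intro order_trans[OF abs_sum_le_card_mult[where M = "\<beta>\<^sup>2 / 2 * \<bar>p - q\<bar> * (real S)\<^sup>2"]])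
    (auto simp: abs_mult abs_le_square_iff[symmetric] intro!: mult_left_mono)

end

sublocale cavity_model \<subseteq> gaussian_interpolation "insert None (Some ` pairs N)" "cavity_edges N" None
  "replicas S N n" f "cavity_base \<beta> D h N n" "cavity_coupling \<beta> N n" "cavity_field \<beta> q N n"
  "cavity_correction \<beta> p q N n" "\<lambda>_. real n * (\<beta> * (real S)\<^sup>2 / sqrt N)"
  "real n * (\<beta> * sqrt q * real S)" "real n * (\<beta>\<^sup>2 / 2 * \<bar>p - q\<bar> * (real S)\<^sup>2)"
proof
  show "(\<lambda>g. cavity_base \<beta> D h N n g s) \<in> borel_measurable (gaussians (insert None (Some ` pairs N)))" for s
    unfolding cavity_base_def by measurable
qed (use finite_pairs f_nonneg_replicas finite_replicas replicas_nonempty cavity_base_upd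
    cavity_coupling_abs_le cavity_field_abs_le cavity_correction_abs_le
    in \<open>auto simp: cavity_edges_def pairs_def\<close>)

context cavity_model
begin

lemma nu_t_eq_nu: "nu_t S \<beta> D h p q N t n f = nu t"
proof -
  have fin: "finite (configs S N)"
    unfolding configs_def spins_def by (intro finite_PiE) auto
  have "gibbs_avg (configs S N) (H_t \<beta> D h p q N t g) n f = avg t g" for g
    unfolding gibbs_avg_eq_gibbs_mean[OF fin] avg_def energy_def[abs_def] sum_H_t_replicas
    by (simp add: replicas_def)
  then show ?thesis
    unfolding nu_t_def nu_def disorder_def by simp
qed

lemma gronwall_const_le: "gronwall_const \<le> 6 * (real n)\<^sup>2 * \<beta>\<^sup>2 * (real S)^4"
proof -
  define X where "X = (real n)\<^sup>2 * \<beta>\<^sup>2 * (real S)^4"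
  have "inj_on (\<lambda>i. Some (i, N)) {1..<N}" by (auto simp: inj_on_def)
  then have "card (cavity_edges N) = N - 1"
    unfolding cavity_edges_def by (simp add: card_image)
  then have A: "(\<Sum>k\<in>cavity_edges N. (real n * (\<beta> * (real S)\<^sup>2 / sqrt N))\<^sup>2) \<le> X"
    using N_pos by (simp add: X_def power_mult_distrib power_divide field_simps of_nat_diff)
  have "(real n * (\<beta> * sqrt q * real S))\<^sup>2 = (real n)\<^sup>2 * \<beta>\<^sup>2 * q * (real S)\<^sup>2"
    using q_bounds by (simp add: power_mult_distrib)
  also have "\<dots> \<le> (real n)\<^sup>2 * \<beta>\<^sup>2 * (real S)\<^sup>2 * (real S)\<^sup>2"
    using q_bounds by (intro mult_right_mono mult_left_mono) auto
  finally have B: "(real n * (\<beta> * sqrt q * real S))\<^sup>2 \<le> X"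
    unfolding X_def by (simp add: power4_eq_xxxx power2_eq_square mult_ac)
  have "2 * (real n * (\<beta>\<^sup>2 / 2 * \<bar>p - q\<bar> * (real S)\<^sup>2)) \<le> real n * \<beta>\<^sup>2 * (real S)\<^sup>2 * (real S)\<^sup>2"
  proof -
    have "\<bar>p - q\<bar> \<le> (real S)\<^sup>2" using p_bounds q_bounds by linarith
    then have "real n * \<beta>\<^sup>2 * \<bar>p - q\<bar> * (real S)\<^sup>2 \<le> real n * \<beta>\<^sup>2 * (real S)\<^sup>2 * (real S)\<^sup>2"
      by (intro mult_right_mono mult_left_mono) auto
    then show ?thesis by (simp add: mult_ac)
  qed
  also have "\<dots> \<le> X"
  proof -
    have "real n \<le> (real n)\<^sup>2" using n_pos by (simp add: power2_eq_square)
    then have "real n * (\<beta>\<^sup>2 * (real S)\<^sup>2 * (real S)\<^sup>2) \<le> (real n)\<^sup>2 * (\<beta>\<^sup>2 * (real S)\<^sup>2 * (real S)\<^sup>2)"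
      by (rule mult_right_mono) simp
    then show ?thesis unfolding X_def by (simp add: power4_eq_xxxx power2_eq_square mult_ac)
  qed
  finally have C: "2 * (real n * (\<beta>\<^sup>2 / 2 * \<bar>p - q\<bar> * (real S)\<^sup>2)) \<le> X" .
  have "0 \<le> X" unfolding X_def by simp
  then have "gronwall_const \<le> 6 * X"
    unfolding gronwall_const_def using A B C by linarith
  then show ?thesis
    unfolding X_def by (simp add: mult_ac)
qed

end

theorem lemma4:
  fixes S N n :: nat and \<beta> D h p q t :: real
    and f :: "(nat \<Rightarrow> nat \<Rightarrow> int) \<Rightarrow> real"
  assumes "S \<ge> 1" and "N \<ge> 1" and "\<beta> \<ge> 0" and "h \<ge> 0"
    and "fp_system S \<beta> D h p q"
    and "\<forall>p' q'. fp_system S \<beta> D h p' q' \<longrightarrow> p' = p \<and> q' = q"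
    and "n \<ge> 1" and "0 \<le> t" and "t \<le> 1"
    and "\<forall>\<sigma>s\<in>replicas S N n. f \<sigma>s \<ge> 0"
  shows "nu_t S \<beta> D h p q N t n f
           \<le> exp (6 * (real n)\<^sup>2 * \<beta>\<^sup>2 * (real S)^4) * nu_t S \<beta> D h p q N 1 n f"
proof -
  interpret cavity_model S N n \<beta> D h p q f
    using assms(2,3,7,10) fp_system_bounds[OF assms(5)] by unfold_locales auto
  have "nu t \<le> exp (gronwall_const * (1 - t)) * nu 1"
    using assms(8,9) by (rule nu_le_exp_nu_1)
  also have "\<dots> \<le> exp (6 * (real n)\<^sup>2 * \<beta>\<^sup>2 * (real S)^4) * nu 1"
    using gronwall_const_le gronwall_const_nonneg assms(8,9) nu_nonneg
    by (intro mult_right_mono) (auto intro: order_trans[OF mult_left_le])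
  finally show ?thesis
    unfolding nu_t_eq_nu .
qed

end
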